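(* Let $p\geq 6$ be even, and write the vertices of $C_p\,\square\, C_3$ as $a_i,b_i,c_i$ ($i\in\{1,\dots,p\}$), where for each $i$ the vertices $a_i,b_i,c_i$ form a triangle, and for each of the letters $x\in\{a,b,c\}$ the vertices $x_1,x_2,\dots,x_p$ form a cycle in this cyclic order (indices modulo $p$). Then there exists a perfect matching of $C_p\,\square\, C_3$ containing the nine edges $a_1a_2,\ b_1b_2,\ c_1c_2,\ a_3c_3,\ b_3b_4,\ a_4a_5,\ c_4c_5,\ b_5b_6,\ a_6c_6$, and no perfect matching containing these nine edges can be extended to a Hamiltonian cycle. In particular, $C_p\,\square\, C_3$ does not have the PMH--property.
   Context: $C_n$ denotes the cycle on $n$ vertices. The Cartesian product $G\,\square\, H$ of graphs $G$ and $H$ has vertex set $V(G)\times V(H)$, where $(u,v)$ and $(u',v')$ are adjacent if and only if either $u=u'$ and $vv'\in E(H)$, or $uu'\in E(G)$ and $v=v'$. A perfect matching $M$ of a graph $G$ can be extended to a Hamiltonian cycle if there exists a perfect matching $N$ of $G$ such that $M\cup N$ is (the edge set of) a Hamiltonian cycle of $G$. A graph has the PMH--property if it admits at least one perfect matching and every perfect matching of it can be extended to a Hamiltonian cycle. *)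

theory Defs
  imports Main
begin

definition cycle_graph_V :: "nat \<Rightarrow> nat set" where
  "cycle_graph_V n = {0..<n}"

definition cycle_graph_E :: "nat \<Rightarrow> nat set set" where
  "cycle_graph_E n = {{i, (i + 1) mod n} | i. i < n}"

definition cart_V :: "'a set \<Rightarrow> 'b set \<Rightarrow> ('a \<times> 'b) set" where
  "cart_V V1 V2 = V1 \<times> V2"

definition cart_E :: "'a set \<Rightarrow> 'a set set \<Rightarrow> 'b set \<Rightarrow> 'b set set \<Rightarrow> ('a \<times> 'b) set set" where
  "cart_E V1 E1 V2 E2 =
     {{(u, v), (u', v')} | u v u' v'.
        u \<in> V1 \<and> u' \<in> V1 \<and> v \<in> V2 \<and> v' \<in> V2 \<and>
        ((u = u' \<and> {v, v'} \<in> E2) \<or> ({u, u'} \<in> E1 \<and> v = v'))}"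

definition perfect_matching :: "'a set \<Rightarrow> 'a set set \<Rightarrow> 'a set set \<Rightarrow> bool" where
  "perfect_matching V E M \<longleftrightarrow> M \<subseteq> E \<and> (\<forall>v\<in>V. \<exists>!e. e \<in> M \<and> v \<in> e)"

definition hamiltonian_cycle :: "'a set \<Rightarrow> 'a set set \<Rightarrow> 'a set set \<Rightarrow> bool" where
  "hamiltonian_cycle V E H \<longleftrightarrow> H \<subseteq> E \<and>
     (\<exists>vs. distinct vs \<and> set vs = V \<and> length vs \<ge> 3 \<and>
        H = {{vs ! k, vs ! ((k + 1) mod length vs)} | k. k < length vs})"

definition extends_to_ham :: "'a set \<Rightarrow> 'a set set \<Rightarrow> 'a set set \<Rightarrow> bool" where
  "extends_to_ham V E M \<longleftrightarrow>
     (\<exists>N. perfect_matching V E N \<and> hamiltonian_cycle V E (M \<union> N))"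

definition PMH_property :: "'a set \<Rightarrow> 'a set set \<Rightarrow> bool" where
  "PMH_property V E \<longleftrightarrow> (\<exists>M. perfect_matching V E M) \<and>
     (\<forall>M. perfect_matching V E M \<longrightarrow> extends_to_ham V E M)"

text \<open>The prism-like graph C_p square C_3, vertices (i, j) with i < p, j < 3.
  Letter a, b, c corresponds to j = 0, 1, 2; the paper's index i (1..p) is i - 1.\<close>
definition CpC3_V :: "nat \<Rightarrow> (nat \<times> nat) set" where
  "CpC3_V p = cart_V (cycle_graph_V p) (cycle_graph_V 3)"

definition CpC3_E :: "nat \<Rightarrow> (nat \<times> nat) set set" where
  "CpC3_E p = cart_E (cycle_graph_V p) (cycle_graph_E p) (cycle_graph_V 3) (cycle_graph_E 3)"

definition va :: "nat \<Rightarrow> nat \<times> nat" where "va i = (i - 1, 0)"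
definition vb :: "nat \<Rightarrow> nat \<times> nat" where "vb i = (i - 1, 1)"
definition vc :: "nat \<Rightarrow> nat \<times> nat" where "vc i = (i - 1, 2)"

definition nine_edges :: "(nat \<times> nat) set set" where
  "nine_edges = {{va 1, va 2}, {vb 1, vb 2}, {vc 1, vc 2}, {va 3, vc 3}, {vb 3, vb 4},
                 {va 4, va 5}, {vc 4, vc 5}, {vb 5, vb 6}, {va 6, vc 6}}"

end

theory Submission
  imports Defs
begin

text \<open>Suppose M contains the nine edges and N is a perfect matching with M \<union> N a
  Hamiltonian cycle. Then M and N are disjoint, since a common edge would be a whole
  component of M \<union> N. A perfect matching cuts a vertex set S in a
  number of edges congruent to card S modulo 2. Applied to N and the six vertices of columns
  2, 3 this gives a3a4 \<in> N \<longleftrightarrow> c3c4 \<in> N; applied to the nine vertices of columns 2, 3, 4,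
  whose only possible N-edge leaving them is b4b5, it gives b4b5 \<in> N. Hence a4 is
  N-matched to c4, or to a3 (and then c3c4 \<in> N); similarly a5 is N-matched to c5, or to a6
  (and then c5c6 \<in> N). In each of the four cases the a- and c-vertices involved are covered
  both by edges of M and by edges of N, so they form a union of cycles of M \<union> N missing a1,
  contradicting Hamiltonicity.\<close>

definition cut_edges :: "'a set set \<Rightarrow> 'a set \<Rightarrow> 'a set set" where
  "cut_edges F S = {e \<in> F. e \<inter> S \<noteq> {} \<and> \<not> e \<subseteq> S}"

lemma cut_edges_Un: "cut_edges (A \<union> B) S = cut_edges A S \<union> cut_edges B S"
  unfolding cut_edges_def by blast

lemma perfect_matchingI:
  assumes "M \<subseteq> E" and "V \<subseteq> \<Union>M"
    and "\<And>e e'. e \<in> M \<Longrightarrow> e' \<in> M \<Longrightarrow> e \<inter> e' \<noteq> {} \<Longrightarrow> e = e'"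
  shows "perfect_matching V E M"
  using assms unfolding perfect_matching_def by blast

lemma perfect_matching_unique_edge:
  assumes "perfect_matching V E M" "x \<in> V" "e \<in> M" "e' \<in> M" "x \<in> e" "x \<in> e'"
  shows "e = e'"
  using assms unfolding perfect_matching_def by blast

lemma perfect_matching_unique_partner:
  assumes "perfect_matching V E M" "x \<in> V" "{x, y} \<in> M" "{x, z} \<in> M"
  shows "y = z"
  using perfect_matching_unique_edge[OF assms(1,2,3,4)] by (auto simp: doubleton_eq_iff)

lemma perfect_matching_partner_exists:
  assumes "perfect_matching V E M" "\<And>e. e \<in> E \<Longrightarrow> card e = 2" "x \<in> V"
  obtains y where "{x, y} \<in> M"
proof -
  obtain e where "e \<in> M" "x \<in> e"
    using assms(1,3) unfolding perfect_matching_def by blast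
  moreover have "card e = 2"
    using assms(1,2) \<open>e \<in> M\<close> unfolding perfect_matching_def by blast
  ultimately show thesis
    using that by (metis card_2_iff insertE insert_commute singletonD)
qed

lemma perfect_matching_cut_edges_Union:
  assumes "perfect_matching V E M" "F \<subseteq> M" "\<Union>F \<subseteq> V"
  shows "cut_edges M (\<Union>F) = {}"
  using assms unfolding cut_edges_def perfect_matching_def by blast

lemma perfect_matching_cut_parity:
  assumes M: "perfect_matching V E M" and E: "\<And>e. e \<in> E \<Longrightarrow> card e = 2"
    and S: "finite S" "S \<subseteq> V"
  shows "even (card S + card (cut_edges M S))"
proof -
  define T where "T = {e \<in> M. e \<inter> S \<noteq> {}}"
  have card_e: "card e = 2" if "e \<in> M" for e
    using that M E unfolding perfect_matching_def by blast
  have disj: "e \<inter> e' \<inter> S = {}" if "e \<in> T" "e' \<in> T" "e \<noteq> e'" for e e'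
    using that S(2) perfect_matching_unique_edge[OF M] unfolding T_def by blast
  have "T \<subseteq> (\<lambda>x. THE e. e \<in> M \<and> x \<in> e) ` S"
  proof
    fix e assume "e \<in> T"
    then obtain x where x: "x \<in> e" "x \<in> S" unfolding T_def by blast
    have "(THE e. e \<in> M \<and> x \<in> e) = e"
    proof (rule the1_equality)
      show "\<exists>!e. e \<in> M \<and> x \<in> e" using x S(2) M unfolding perfect_matching_def by blast
      show "e \<in> M \<and> x \<in> e" using \<open>e \<in> T\<close> x unfolding T_def by blast
    qed
    thus "e \<in> (\<lambda>x. THE e. e \<in> M \<and> x \<in> e) ` S" using x by force
  qed
  hence "finite T" using S(1) by (simp add: finite_subset)
  have "S = (\<Union>e\<in>T. e \<inter> S)"
    using M S(2) unfolding T_def perfect_matching_def by blast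
  hence "card S = card (\<Union>e\<in>T. e \<inter> S)" by simp
  also have "\<dots> = (\<Sum>e\<in>T. card (e \<inter> S))"
    using \<open>finite T\<close> S(1) disj by (intro card_UN_disjoint) auto
  also have "\<dots> = (\<Sum>e\<in>T. if e \<subseteq> S then 2 else 1)"
  proof (rule sum.cong)
    fix e assume "e \<in> T"
    then obtain a b where "e = {a, b}" "a \<noteq> b" "e \<inter> S \<noteq> {}"
      using card_e unfolding T_def card_2_iff by blast
    thus "card (e \<inter> S) = (if e \<subseteq> S then 2 else 1)"
      by (cases "a \<in> S"; cases "b \<in> S") auto
  qed simp
  also have "\<dots> = 2 * card {e \<in> T. e \<subseteq> S} + card (cut_edges M S)"
  proof -
    have "cut_edges M S = {e \<in> T. \<not> e \<subseteq> S}" unfolding cut_edges_def T_def by blast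
    moreover have "T \<inter> {e. e \<subseteq> S} = {e \<in> T. e \<subseteq> S}" "T \<inter> - {e. e \<subseteq> S} = {e \<in> T. \<not> e \<subseteq> S}"
      by auto
    ultimately show ?thesis using \<open>finite T\<close> by (simp add: sum.If_cases)
  qed
  finally show ?thesis by simp
qed

lemma even_card_subset_doubleton:
  assumes "X \<subseteq> {a, b}" "even (card X)"
  shows "a \<in> X \<longleftrightarrow> b \<in> X"
proof -
  have "X = {a}" if "a \<in> X" "b \<notin> X" using assms(1) that by blast
  moreover have "X = {b}" if "b \<in> X" "a \<notin> X" using assms(1) that by blast
  ultimately show ?thesis using assms(2) by (cases "a \<in> X"; cases "b \<in> X") auto
qed

lemma hamiltonian_cycle_cut_edges_nonempty:
  assumes H: "hamiltonian_cycle V E H" and "x \<in> S" "x \<in> V" "y \<in> V" "y \<notin> S"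
  shows "cut_edges H S \<noteq> {}"
proof
  assume closed: "cut_edges H S = {}"
  from H obtain vs where vs: "distinct vs" "set vs = V" "length vs \<ge> 3"
    "H = {{vs ! k, vs ! ((k + 1) mod length vs)} | k. k < length vs}"
    unfolding hamiltonian_cycle_def by blast
  let ?n = "length vs"
  obtain k where k: "k < ?n" "vs ! k = x" using assms(3) vs(2) by (metis in_set_conv_nth)
  have walk: "vs ! ((k + j) mod ?n) \<in> S" for j
  proof (induction j)
    case 0 thus ?case using k assms(2) by simp
  next
    case (Suc j)
    let ?m = "(k + j) mod ?n"
    have "?m < ?n" using vs(3) by (intro mod_less_divisor) linarith
    hence "{vs ! ?m, vs ! ((?m + 1) mod ?n)} \<in> H" using vs(4) by blast
    hence "vs ! ((?m + 1) mod ?n) \<in> S" using closed Suc.IH unfolding cut_edges_def by blast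
    thus ?case by (simp add: mod_Suc_eq)
  qed
  obtain l where l: "l < ?n" "vs ! l = y" using assms(4) vs(2) by (metis in_set_conv_nth)
  have "(k + (l + ?n - k)) mod ?n = l" using k(1) l(1) by simp
  thus False using walk[of "l + ?n - k"] l assms(5) by simp
qed

lemma hamiltonian_no_proper_common_cover:
  assumes M: "perfect_matching V E M" and N: "perfect_matching V E N"
    and H: "hamiltonian_cycle V E (M \<union> N)"
    and F: "FM \<subseteq> M" "FN \<subseteq> N" "\<Union>FM = \<Union>FN" "\<Union>FM \<subseteq> V"
    and "x \<in> \<Union>FM" "y \<in> V" "y \<notin> \<Union>FM"
  shows False
proof -
  have "cut_edges M (\<Union>FM) = {}"
    by (rule perfect_matching_cut_edges_Union[OF M F(1,4)])
  moreover have "cut_edges N (\<Union>FM) = {}"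
    unfolding F(3) by (rule perfect_matching_cut_edges_Union[OF N F(2)]) (use F(3,4) in simp)
  ultimately have "cut_edges (M \<union> N) (\<Union>FM) = {}" by (simp add: cut_edges_Un)
  moreover have "x \<in> V" using assms(8) F(4) by blast
  hence "cut_edges (M \<union> N) (\<Union>FM) \<noteq> {}"
    by (rule hamiltonian_cycle_cut_edges_nonempty[OF H assms(8) _ assms(9,10)])
  ultimately show False by contradiction
qed

lemma hamiltonian_union_matchings_disjoint:
  assumes M: "perfect_matching V E M" and N: "perfect_matching V E N"
    and H: "hamiltonian_cycle V E (M \<union> N)"
  shows "M \<inter> N = {}"
proof (rule ccontr)
  assume "M \<inter> N \<noteq> {}"
  then obtain e where e: "e \<in> M" "e \<in> N" by blast
  from H obtain vs where vs: "distinct vs" "set vs = V" "length vs \<ge> 3"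
    "M \<union> N = {{vs ! k, vs ! ((k + 1) mod length vs)} | k. k < length vs}"
    unfolding hamiltonian_cycle_def by blast
  then obtain k where "k < length vs" "e = {vs ! k, vs ! ((k + 1) mod length vs)}"
    using e(1) by blast
  then obtain a b where ab: "e = {a, b}" "a \<in> V" "b \<in> V"
    using vs(2) by (metis nth_mem mod_less_divisor gr_zeroI less_zeroE)
  have "card e \<le> 2" using ab(1) by (simp add: card_insert_if)
  moreover have "card V \<ge> 3" using vs by (metis distinct_card)
  ultimately have "\<not> V \<subseteq> e" using ab(1) card_mono[of e V] by fastforce
  then obtain y where "y \<in> V" "y \<notin> e" by blast
  thus False
    using hamiltonian_no_proper_common_cover[OF M N H, of "{e}" "{e}" a y] e ab by auto
qed

lemma CpC3_V_iff [simp]: "(i, j) \<in> CpC3_V p \<longleftrightarrow> i < p \<and> j < 3"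
  by (simp add: CpC3_V_def cart_V_def cycle_graph_V_def)

lemma cycle_graph_E_doubleton_iff:
  assumes "0 < n"
  shows "{a, b} \<in> cycle_graph_E n \<longleftrightarrow> a < n \<and> b < n \<and> (b = Suc a mod n \<or> a = Suc b mod n)"
proof
  assume "{a, b} \<in> cycle_graph_E n"
  then obtain i where "i < n" "{a, b} = {i, Suc i mod n}" by (auto simp: cycle_graph_E_def)
  thus "a < n \<and> b < n \<and> (b = Suc a mod n \<or> a = Suc b mod n)"
    using assms by (auto simp: doubleton_eq_iff)
next
  assume "a < n \<and> b < n \<and> (b = Suc a mod n \<or> a = Suc b mod n)"
  thus "{a, b} \<in> cycle_graph_E n"
    unfolding cycle_graph_E_def by (auto simp: insert_commute)
qed

lemma cart_E_doubleton_iff: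
  "{(u, v), (u', v')} \<in> cart_E V1 E1 V2 E2 \<longleftrightarrow>
     u \<in> V1 \<and> u' \<in> V1 \<and> v \<in> V2 \<and> v' \<in> V2 \<and>
     ((u = u' \<and> {v, v'} \<in> E2) \<or> ({u, u'} \<in> E1 \<and> v = v'))"
  unfolding cart_E_def by (auto simp: doubleton_eq_iff insert_commute)

lemma CpC3_E_doubleton_iff:
  assumes "0 < p"
  shows "{(i, j), (i', j')} \<in> CpC3_E p \<longleftrightarrow> i < p \<and> i' < p \<and> j < 3 \<and> j' < 3 \<and>
     ((i = i' \<and> (j' = Suc j mod 3 \<or> j = Suc j' mod 3)) \<or>
      (j = j' \<and> (i' = Suc i mod p \<or> i = Suc i' mod p)))"
  using assms by (auto simp: CpC3_E_def cart_E_doubleton_iff cycle_graph_E_doubleton_iff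
      cycle_graph_V_def)

lemma CpC3_E_obtain:
  assumes "e \<in> CpC3_E p"
  obtains x y where "e = {x, y}"
  using assms by (auto simp: CpC3_E_def cart_E_def)

lemma card_CpC3_E:
  assumes "2 \<le> p" "e \<in> CpC3_E p"
  shows "card e = 2"
proof -
  obtain i j i' j' where e: "e = {(i, j), (i', j')}"
    using assms(2) by (metis CpC3_E_obtain surj_pair)
  have no_loop: "Suc k mod n \<noteq> k" if "k < n" "2 \<le> n" for k n :: nat
    using that by (cases "Suc k = n") auto
  have "(i, j) \<noteq> (i', j')"
    using assms CpC3_E_doubleton_iff[of p i j i' j'] e no_loop[of j 3] no_loop[of i p] by auto
  thus ?thesis using e by simp
qed

lemma CpC3_E_neighbour:
  assumes "{(i, j), y} \<in> CpC3_E p" "0 < i" "Suc i < p"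
  shows "y = (i - 1, j) \<or> y = (Suc i, j) \<or> (fst y = i \<and> snd y \<noteq> j \<and> snd y < 3)"
proof -
  obtain i' j' where y: "y = (i', j')" by fastforce
  have "Suc k mod 3 \<noteq> k" "k \<noteq> Suc k mod 3" for k :: nat by presburger+
  moreover have "i = Suc i' mod p \<Longrightarrow> i' < p \<Longrightarrow> i' = i - 1"
    using assms(2) by (cases "Suc i' = p") auto
  ultimately show ?thesis
    using assms CpC3_E_doubleton_iff[of p i j i' j'] y by auto
qed

lemma cut_edges_CpC3_column_band:
  assumes "0 < lo" "Suc hi < p"
  shows "cut_edges (CpC3_E p) ({lo..hi} \<times> {..<3}) \<subseteq>
    {{(lo - 1, j), (lo, j)} | j. j < 3} \<union> {{(hi, j), (Suc hi, j)} | j. j < 3}"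
    (is "cut_edges _ ?B \<subseteq> ?left \<union> ?right")
proof
  fix e assume e: "e \<in> cut_edges (CpC3_E p) ?B"
  obtain a b where ab: "e = {a, b}" using e unfolding cut_edges_def by (blast elim: CpC3_E_obtain)
  have "e = {a, b} \<and> a \<in> ?B \<and> b \<notin> ?B \<or> e = {b, a} \<and> b \<in> ?B \<and> a \<notin> ?B"
    using e ab unfolding cut_edges_def by blast
  then obtain x y where xy: "e = {x, y}" "x \<in> ?B" "y \<notin> ?B" by blast
  obtain i j where x: "x = (i, j)" "lo \<le> i" "i \<le> hi" "j < 3" using xy(2) by auto
  have "{(i, j), y} \<in> CpC3_E p" using e xy(1) x(1) unfolding cut_edges_def by simp
  hence "y = (i - 1, j) \<or> y = (Suc i, j) \<or> (fst y = i \<and> snd y \<noteq> j \<and> snd y < 3)"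
    using assms x by (intro CpC3_E_neighbour) auto
  thus "e \<in> ?left \<union> ?right"
  proof (elim disjE)
    assume "y = (i - 1, j)"
    hence "i = lo" using xy(3) x by (cases "i = lo") auto
    thus ?thesis using xy(1) x \<open>y = (i - 1, j)\<close> by (auto simp: insert_commute)
  next
    assume "y = (Suc i, j)"
    hence "i = hi" using xy(3) x by (cases "i = hi") auto
    thus ?thesis using xy(1) x \<open>y = (Suc i, j)\<close> by auto
  next
    assume "fst y = i \<and> snd y \<noteq> j \<and> snd y < 3"
    hence "y \<in> ?B" using x by (cases y) auto
    thus ?thesis using xy(3) by contradiction
  qed
qed

lemma nine_edges_coordinates:
  "nine_edges = {{(0, 0), (1, 0)}, {(0, 1), (1, 1)}, {(0, 2), (1, 2)}, {(2, 0), (2, 2)},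
     {(2, 1), (3, 1)}, {(3, 0), (4, 0)}, {(3, 2), (4, 2)}, {(4, 1), (5, 1)}, {(5, 0), (5, 2)}}"
  by (simp add: nine_edges_def va_def vb_def vc_def)

lemma less_3_cases: "(j::nat) < 3 \<longleftrightarrow> j = 0 \<or> j = 1 \<or> j = 2"
  by auto

lemma nine_edges_first_columns: "j < 3 \<Longrightarrow> {(0, j), (1, j)} \<in> nine_edges"
  unfolding less_3_cases by (elim disjE) (simp_all add: nine_edges_coordinates)

lemma nine_edges_subset_CpC3_E:
  assumes "6 \<le> p"
  shows "nine_edges \<subseteq> CpC3_E p"
  using assms by (auto simp: nine_edges_def va_def vb_def vc_def CpC3_E_doubleton_iff)

lemma nine_edges_disjoint:
  "e \<in> nine_edges \<Longrightarrow> e' \<in> nine_edges \<Longrightarrow> e \<inter> e' \<noteq> {} \<Longrightarrow> e = e'"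
  unfolding nine_edges_def va_def vb_def vc_def by (elim insertE emptyE) simp_all

definition nine_edges_completion :: "nat \<Rightarrow> (nat \<times> nat) set set" where
  "nine_edges_completion p =
     nine_edges \<union> {{(i, j), (Suc i, j)} | i j. 6 \<le> i \<and> even i \<and> i < p \<and> j < 3}"

lemma horizontal_edge_in_nine_edges_completion:
  "6 \<le> i \<Longrightarrow> even i \<Longrightarrow> i < p \<Longrightarrow> j < 3 \<Longrightarrow> {(i, j), (Suc i, j)} \<in> nine_edges_completion p"
  unfolding nine_edges_completion_def
  by (rule UnI2, rule CollectI, rule exI[of _ i], rule exI[of _ j]) simp

lemma nine_edges_completion_cases:
  assumes "e \<in> nine_edges_completion p"
  obtains "e \<in> nine_edges" | i j where "e = {(i, j), (Suc i, j)}" "6 \<le> i" "even i"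
  using assms unfolding nine_edges_completion_def by blast

lemma perfect_matching_nine_edges_completion:
  assumes p: "even p" "6 \<le> p"
  shows "perfect_matching (CpC3_V p) (CpC3_E p) (nine_edges_completion p)"
proof (rule perfect_matchingI)
  have "Suc i < p" if "even i" "i < p" for i
    using that p(1) by (metis Suc_lessI even_Suc)
  thus "nine_edges_completion p \<subseteq> CpC3_E p"
    using nine_edges_subset_CpC3_E[OF p(2)] p(2)
    by (auto simp: nine_edges_completion_def CpC3_E_doubleton_iff)
next
  show "CpC3_V p \<subseteq> \<Union> (nine_edges_completion p)"
  proof
    fix x assume "x \<in> CpC3_V p"
    then obtain i j where x: "x = (i, j)" "i < p" "j < 3" by (cases x) auto
    show "x \<in> \<Union> (nine_edges_completion p)"
    proof (cases "i < 6")
      case True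
      hence "x \<in> \<Union> nine_edges"
        using x by (auto simp: nine_edges_def va_def vb_def vc_def less_Suc_eq numeral_eq_Suc)
      thus ?thesis by (auto simp: nine_edges_completion_def)
    next
      case False
      show ?thesis
      proof (cases "even i")
        case True
        hence "{(i, j), (Suc i, j)} \<in> nine_edges_completion p"
          using False x by (simp add: horizontal_edge_in_nine_edges_completion)
        thus ?thesis using x by blast
      next
        case odd: False
        hence "x \<in> {(i - 1, j), (Suc (i - 1), j)}" "6 \<le> i - 1" "even (i - 1)"
          using x \<open>\<not> i < 6\<close> by (auto elim: oddE)
        moreover have "{(i - 1, j), (Suc (i - 1), j)} \<in> nine_edges_completion p"
          using calculation(2,3) x by (intro horizontal_edge_in_nine_edges_completion) auto
        ultimately show ?thesis by blast
      qed
    qed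
  qed
next
  have nine: "fst x < 6" if "x \<in> e" "e \<in> nine_edges" for x e
    using that by (auto simp: nine_edges_def va_def vb_def vc_def)
  fix e e' assume e: "e \<in> nine_edges_completion p" "e' \<in> nine_edges_completion p" "e \<inter> e' \<noteq> {}"
  from e(1) show "e = e'"
  proof (cases rule: nine_edges_completion_cases)
    case 1
    from e(2) show ?thesis
    proof (cases rule: nine_edges_completion_cases)
      case 1 thus ?thesis using \<open>e \<in> nine_edges\<close> e(3) nine_edges_disjoint by blast
    next
      case (2 k l) thus ?thesis using \<open>e \<in> nine_edges\<close> e(3) nine by fastforce
    qed
  next
    case (2 i j)
    from e(2) show ?thesis
    proof (cases rule: nine_edges_completion_cases)
      case 1 thus ?thesis using \<open>e = {(i, j), (Suc i, j)}\<close> \<open>6 \<le> i\<close> e(3) nine by fastforce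
    next
      case (2 k l) thus ?thesis using \<open>e = {(i, j), (Suc i, j)}\<close> \<open>even i\<close> e(3) by auto
    qed
  qed
qed

lemma nine_edges_subset_completion: "nine_edges \<subseteq> nine_edges_completion p"
  by (simp add: nine_edges_completion_def)

context
  fixes p :: nat and M N :: "(nat \<times> nat) set set"
  assumes p: "6 \<le> p"
    and M: "perfect_matching (CpC3_V p) (CpC3_E p) M"
    and N: "perfect_matching (CpC3_V p) (CpC3_E p) N"
    and nine: "nine_edges \<subseteq> M"
    and ham: "hamiltonian_cycle (CpC3_V p) (CpC3_E p) (M \<union> N)"
begin

lemma card_CpC3_edge: "e \<in> CpC3_E p \<Longrightarrow> card e = 2"
  using p by (intro card_CpC3_E) auto

lemma nine_edges_notin_N: "e \<in> nine_edges \<Longrightarrow> e \<notin> N"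
  using hamiltonian_union_matchings_disjoint[OF M N ham] nine by blast

lemma N_partner_cases:
  assumes "0 < i" "Suc i < p" "j < 3"
  obtains "{(i, j), (i - 1, j)} \<in> N" | "{(i, j), (Suc i, j)} \<in> N"
    | "{(i, j), (i, (j + 1) mod 3)} \<in> N" | "{(i, j), (i, (j + 2) mod 3)} \<in> N"
proof -
  have "(i, j) \<in> CpC3_V p" using assms by simp
  then obtain y where y: "{(i, j), y} \<in> N"
    using perfect_matching_partner_exists[OF N card_CpC3_edge] by blast
  hence "{(i, j), y} \<in> CpC3_E p" using N by (auto simp: perfect_matching_def)
  hence "y = (i - 1, j) \<or> y = (Suc i, j) \<or> (fst y = i \<and> snd y \<noteq> j \<and> snd y < 3)"
    using assms by (intro CpC3_E_neighbour) auto
  moreover have "snd y = (j + 1) mod 3 \<or> snd y = (j + 2) mod 3"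
    if "snd y \<noteq> j" "snd y < 3" using that assms(3) by presburger
  ultimately show thesis using y that by (cases y) auto
qed

lemma even_card_cut_N_column_band:
  assumes "0 < lo" "Suc hi < p"
  shows "even (3 * (Suc hi - lo) + card (cut_edges N ({lo..hi} \<times> {..<3})))"
proof -
  have "even (card ({lo..hi} \<times> {..<3::nat}) + card (cut_edges N ({lo..hi} \<times> {..<3})))"
    using assms p by (intro perfect_matching_cut_parity[OF N card_CpC3_edge]) auto
  thus ?thesis by (simp add: card_cartesian_product)
qed

lemma cut_edges_N_column_band:
  assumes "0 < lo" "Suc hi < p"
  shows "cut_edges N ({lo..hi} \<times> {..<3}) \<subseteq>
    {{(lo - 1, j), (lo, j)} | j. j < 3} \<union> {{(hi, j), (Suc hi, j)} | j. j < 3}"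
proof -
  have "cut_edges N ({lo..hi} \<times> {..<3}) \<subseteq> cut_edges (CpC3_E p) ({lo..hi} \<times> {..<3})"
    using N unfolding perfect_matching_def cut_edges_def by blast
  thus ?thesis using cut_edges_CpC3_column_band[OF assms] by blast
qed

lemma vb4_vb5_in_N: "{vb 4, vb 5} \<in> N"
proof -
  let ?C = "cut_edges N ({1..3} \<times> {..<3})"
  have "?C \<subseteq> {{(3, 1), (4, 1)}}"
  proof
    fix e assume e: "e \<in> ?C"
    hence "e \<in> N" unfolding cut_edges_def by blast
    hence "e \<notin> nine_edges" using nine_edges_notin_N by blast
    moreover obtain j where "j < 3" "e = {(0, j), (1, j)} \<or> e = {(3, j), (4, j)}"
      using e cut_edges_N_column_band[of 1 3] p by auto
    moreover have "{(3, 0), (4, 0)} \<in> nine_edges" "{(3, 2), (4, 2)} \<in> nine_edges"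
      by (simp_all add: nine_edges_coordinates)
    ultimately show "e \<in> {{(3, 1), (4, 1)}}"
      using nine_edges_first_columns by (auto simp: less_3_cases)
  qed
  moreover have "odd (card ?C)"
    using even_card_cut_N_column_band[of 1 3] p by simp
  ultimately have "?C = {{(3, 1), (4, 1)}}"
    by (metis card.empty odd_card_imp_not_empty subset_singletonD)
  thus ?thesis unfolding cut_edges_def vb_def by auto
qed

lemma va3_va4_in_N_iff: "{va 3, va 4} \<in> N \<longleftrightarrow> {vc 3, vc 4} \<in> N"
proof -
  let ?S = "{1..2} \<times> {..<3::nat}"
  let ?C = "cut_edges N ?S"
  have "?C \<subseteq> {{(2, 0), (3, 0)}, {(2, 2), (3, 2)}}"
  proof
    fix e assume e: "e \<in> ?C"
    hence "e \<in> N" unfolding cut_edges_def by blast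
    hence "e \<notin> nine_edges" using nine_edges_notin_N by blast
    moreover obtain j where "j < 3" "e = {(0, j), (1, j)} \<or> e = {(2, j), (3, j)}"
      using e cut_edges_N_column_band[of 1 2] p by auto
    moreover have "{(2, 1), (3, 1)} \<in> nine_edges" by (simp add: nine_edges_coordinates)
    ultimately show "e \<in> {{(2, 0), (3, 0)}, {(2, 2), (3, 2)}}"
      using nine_edges_first_columns by (auto simp: less_3_cases)
  qed
  moreover have "even (card ?C)"
    using even_card_cut_N_column_band[of 1 2] p by simp
  ultimately have "{(2, 0), (3, 0)} \<in> ?C \<longleftrightarrow> {(2, 2), (3, 2)} \<in> ?C"
    by (rule even_card_subset_doubleton)
  moreover have "{(2, 0), (3, 0)} \<in> ?C \<longleftrightarrow> {(2, 0), (3, 0)} \<in> N"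
    "{(2, 2), (3, 2)} \<in> ?C \<longleftrightarrow> {(2, 2), (3, 2)} \<in> N"
    unfolding cut_edges_def by simp_all
  ultimately show ?thesis unfolding va_def vc_def by simp
qed

lemma N_edges_at_column_4: "{va 4, vc 4} \<in> N \<or> {va 3, va 4} \<in> N \<and> {vc 3, vc 4} \<in> N"
proof -
  have b4b5: "{(3, 1), (4, 1)} \<in> N" using vb4_vb5_in_N by (simp add: vb_def)
  have "0 < (3::nat)" "Suc 3 < p" "(0::nat) < 3" using p by simp_all
  then show ?thesis
  proof (cases rule: N_partner_cases)
    case 1
    hence "{va 3, va 4} \<in> N" by (simp add: va_def insert_commute)
    thus ?thesis using va3_va4_in_N_iff by blast
  next
    case 2
    thus ?thesis using nine_edges_notin_N by (simp add: nine_edges_coordinates)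
  next
    case 3
    hence "{(3, 1), (3, 0)} \<in> N" by (simp add: insert_commute)
    from perfect_matching_unique_partner[OF N _ this b4b5] p show ?thesis by simp
  next
    case 4
    thus ?thesis by (simp add: va_def vc_def numeral_2_eq_2)
  qed
qed

lemma N_edges_at_column_5: "{va 5, vc 5} \<in> N \<or> {va 5, va 6} \<in> N \<and> {vc 5, vc 6} \<in> N"
proof -
  have b4b5: "{(4, 1), (3, 1)} \<in> N" using vb4_vb5_in_N by (simp add: vb_def insert_commute)
  have "0 < (4::nat)" "Suc 4 < p" "(0::nat) < 3" using p by simp_all
  then show ?thesis
  proof (cases rule: N_partner_cases)
    case 1
    thus ?thesis using nine_edges_notin_N by (simp add: nine_edges_coordinates insert_commute)
  next
    case 2
    hence a5a6: "{(4, 0), (5, 0)} \<in> N" by simp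
    have "0 < (4::nat)" "Suc 4 < p" "(2::nat) < 3" using p by simp_all
    hence "{(4, 2), (5, 2)} \<in> N"
    proof (cases rule: N_partner_cases)
      case 1
      thus ?thesis using nine_edges_notin_N by (simp add: nine_edges_coordinates insert_commute)
    next
      case 2
      thus ?thesis by simp
    next
      case 3
      hence "{(4, 0), (4, 2)} \<in> N" by (simp add: insert_commute)
      from perfect_matching_unique_partner[OF N _ this a5a6] p show ?thesis by simp
    next
      case 4
      hence "{(4, 1), (4, 2)} \<in> N" by (simp add: insert_commute)
      from perfect_matching_unique_partner[OF N _ this b4b5] p show ?thesis by simp
    qed
    thus ?thesis using a5a6 by (simp add: va_def vc_def)
  next
    case 3
    hence "{(4, 1), (4, 0)} \<in> N" by (simp add: insert_commute)
    from perfect_matching_unique_partner[OF N _ this b4b5] p show ?thesis by simp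
  next
    case 4
    thus ?thesis by (simp add: va_def vc_def numeral_2_eq_2)
  qed
qed

lemma no_common_cover:
  assumes "FM \<subseteq> nine_edges" "FN \<subseteq> N" "\<Union>FM = \<Union>FN" "va 4 \<in> \<Union>FM" "va 1 \<notin> \<Union>FM"
  shows False
proof (rule hamiltonian_no_proper_common_cover[OF M N ham])
  show "\<Union>FM \<subseteq> CpC3_V p"
    using assms(1) p by (auto simp: nine_edges_def va_def vb_def vc_def)
  show "va 1 \<in> CpC3_V p" using p by (simp add: va_def)
qed (use assms nine in auto)

lemma no_hamiltonian_extension: False
  using N_edges_at_column_4 N_edges_at_column_5
proof (elim disjE conjE)
  assume "{va 4, vc 4} \<in> N" "{va 5, vc 5} \<in> N"
  thus False
    by (intro no_common_cover[of "{{va 4, va 5}, {vc 4, vc 5}}" "{{va 4, vc 4}, {va 5, vc 5}}"])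
      (auto simp: nine_edges_def va_def vc_def)
next
  assume "{va 4, vc 4} \<in> N" "{va 5, va 6} \<in> N" "{vc 5, vc 6} \<in> N"
  thus False
    by (intro no_common_cover[of "{{va 4, va 5}, {vc 4, vc 5}, {va 6, vc 6}}"
          "{{va 4, vc 4}, {va 5, va 6}, {vc 5, vc 6}}"])
      (auto simp: nine_edges_def va_def vc_def)
next
  assume "{va 3, va 4} \<in> N" "{vc 3, vc 4} \<in> N" "{va 5, vc 5} \<in> N"
  thus False
    by (intro no_common_cover[of "{{va 3, vc 3}, {va 4, va 5}, {vc 4, vc 5}}"
          "{{va 3, va 4}, {vc 3, vc 4}, {va 5, vc 5}}"])
      (auto simp: nine_edges_def va_def vc_def)
next
  assume "{va 3, va 4} \<in> N" "{vc 3, vc 4} \<in> N" "{va 5, va 6} \<in> N" "{vc 5, vc 6} \<in> N"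
  thus False
    by (intro no_common_cover[of "{{va 3, vc 3}, {va 4, va 5}, {vc 4, vc 5}, {va 6, vc 6}}"
          "{{va 3, va 4}, {vc 3, vc 4}, {va 5, va 6}, {vc 5, vc 6}}"])
      (auto simp: nine_edges_def va_def vc_def)
qed

end

theorem mainTheorem3:
  fixes p :: nat
  assumes "even p" and "p \<ge> 6"
  shows "(\<exists>M. perfect_matching (CpC3_V p) (CpC3_E p) M \<and> nine_edges \<subseteq> M)
       \<and> (\<forall>M. perfect_matching (CpC3_V p) (CpC3_E p) M \<and> nine_edges \<subseteq> M
              \<longrightarrow> \<not> extends_to_ham (CpC3_V p) (CpC3_E p) M)
       \<and> \<not> PMH_property (CpC3_V p) (CpC3_E p)"
proof -
  have ex: "\<exists>M. perfect_matching (CpC3_V p) (CpC3_E p) M \<and> nine_edges \<subseteq> M"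
    using perfect_matching_nine_edges_completion[OF assms] nine_edges_subset_completion by blast
  have no_ext: "\<forall>M. perfect_matching (CpC3_V p) (CpC3_E p) M \<and> nine_edges \<subseteq> M
              \<longrightarrow> \<not> extends_to_ham (CpC3_V p) (CpC3_E p) M"
    using no_hamiltonian_extension assms(2) unfolding extends_to_ham_def by blast
  have "\<not> PMH_property (CpC3_V p) (CpC3_E p)"
    using ex no_ext unfolding PMH_property_def by blast
  with ex no_ext show ?thesis by blast
qed

end
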